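(* Let $\mathcal{D}=\{x_1,\ldots,x_M\}\subset\mathbb{R}^3$ be a finite point cloud of $M$ pairwise distinct points. Then for every $\epsilon$ with $$0<\epsilon<\tfrac{1}{2}\min_{1\le i<j\le M}\|x_i-x_j\|_2,$$ there exists $\delta>0$ such that for every point cloud $\mathcal{D}'=\{x_1',\ldots,x_M'\}\subset\mathbb{R}^3$ with $\max_{1\le i\le M}\|x_i-x_i'\|_2\le\delta$, one has $$\big\|\chi(\mathcal{K}(r))-\chi(\mathcal{K}'(r))\big\|_1\le \tfrac{1}{4}M^4\epsilon,$$ where $\{\mathcal{K}(r)\}_{r\ge0}$ and $\{\mathcal{K}'(r)\}_{r\ge0}$ are the Alpha filtrations of $\mathcal{D}$ and $\mathcal{D}'$ respectively.
   Context: For a finite set $P=\{x_1,\dots,x_n\}\subset\mathbb{R}^d$, the Voronoi cell of $x_i$ is $V(x_i)=\{x\in\mathbb{R}^d:\|x-x_i\|\le\|x-x_j\|\ \forall j\}$, and $B(x_i,r)$ is the closed Euclidean ball of radius $r$ about $x_i$. The nerve of a family of sets $\{U_i\}_{i\in\Lambda}$ is the simplicial complex on vertex set $\Lambda$ in which $\{i_0,\dots,i_k\}$ spans a $k$-simplex iff $U_{i_0}\cap\cdots\cap U_{i_k}\neq\emptyset$. The Alpha complex of $P$ at scale $r\ge 0$ is the nerve of $\{V(x_i)\cap B(x_i,r)\}_{i}$; as $r$ increases these complexes are nested and form the Alpha filtration $\{\mathcal{K}(r)\}_{r\ge0}$. For a finite simplicial complex $\mathcal{K}$, $\chi(\mathcal{K})=\sum_{i\ge0}(-1)^iC_i(\mathcal{K})$,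 where $C_i(\mathcal{K})$ is the number of $i$-simplices. The Euler characteristic curve is the function $r\mapsto\chi(\mathcal{K}(r))$ on $[0,\infty)$, and $\|\chi(\mathcal{K}(r))-\chi(\mathcal{K}'(r))\|_1=\int_0^\infty|\chi(\mathcal{K}(r))-\chi(\mathcal{K}'(r))|\,dr$ (the $L^1$ norm in the scale variable $r$). *)

theory Defs
  imports "HOL-Analysis.Analysis"
begin

text \<open>A point cloud of M points is an indexed family P :: nat => real^3 on indices {..<M}.\<close>

definition voronoi_cell :: "(nat \<Rightarrow> real^3) \<Rightarrow> nat \<Rightarrow> nat \<Rightarrow> (real^3) set" where
  "voronoi_cell P M i = {x. \<forall>j<M. dist x (P i) \<le> dist x (P j)}"

definition nerve :: "'i set \<Rightarrow> ('i \<Rightarrow> 'a set) \<Rightarrow> 'i set set" where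
  "nerve Lambda U = {s. s \<subseteq> Lambda \<and> s \<noteq> {} \<and> finite s \<and> (\<Inter>i\<in>s. U i) \<noteq> {}}"

definition alpha_complex :: "(nat \<Rightarrow> real^3) \<Rightarrow> nat \<Rightarrow> real \<Rightarrow> nat set set" where
  "alpha_complex P M r = nerve {..<M} (\<lambda>i. voronoi_cell P M i \<inter> cball (P i) r)"

definition num_simplices :: "'i set set \<Rightarrow> nat \<Rightarrow> nat" where
  "num_simplices K i = card {s\<in>K. card s = Suc i}"

text \<open>Euler characteristic of a finite simplicial complex whose simplices have at most n vertices.\<close>
definition euler_char :: "'i set set \<Rightarrow> nat \<Rightarrow> int" where
  "euler_char K n = (\<Sum>i<n. (-1)^i * int (num_simplices K i))"

text \<open>Euler characteristic curve of the Alpha filtration of an M-point cloud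
  (simplices have at most M vertices, so summing over dimensions < M covers all).\<close>
definition ecc :: "(nat \<Rightarrow> real^3) \<Rightarrow> nat \<Rightarrow> real \<Rightarrow> int" where
  "ecc P M r = euler_char (alpha_complex P M r) M"

end

theory Submission
  imports Defs
begin

text \<open>
  The Euler characteristic of the nerve of finitely many closed convex sets in Euclidean space
  depends only on their union. If the union is convex it equals 1: group the simplices by the
  point of their intersection nearest to a fixed point z of the union; the fibre over z
  contributes 1, and every other fibre cancels by induction on the number of sets. The general
  case follows by double counting pairs of simplices. Since the Voronoi-restricted balls have the
  same union as the balls themselves, the Alpha complex and the Cech complex have the same Euler
  characteristic curve.

  In the Cech filtration a simplex is present at scale r iff the balls of radius r around its
  vertices meet, and moving every point by at most \<delta> shifts this threshold by at most \<delta>.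
  Hence each of the 2^M - 1 simplices contributes at most \<delta> to the L1 distance, and
  \<delta> = \<epsilon> / 2^(M+2) gives the bound.
\<close>

section \<open>Euler characteristic of nerves of convex sets\<close>

definition nerve_euler :: "'i set \<Rightarrow> ('i \<Rightarrow> 'a set) \<Rightarrow> int" where
  "nerve_euler I U = (\<Sum>s\<in>nerve I U. (-1) ^ (card s - 1))"

lemma nerve_finite_eq:
  assumes "finite I"
  shows "nerve I U = {s\<in>Pow I - {{}}. \<Inter>(U ` s) \<noteq> {}}"
  using assms unfolding nerve_def by (auto intro: finite_subset)

lemma finite_nerve [simp]: "finite I \<Longrightarrow> finite (nerve I U)"
  by (simp add: nerve_finite_eq)

lemma sum_Pow_nonempty_minus_one_power:
  assumes "finite T" "T \<noteq> {}"
  shows "(\<Sum>s\<in>Pow T - {{}}. (-1) ^ (card s - 1)) = (1::'a::comm_ring_1)"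
proof -
  have "(\<Sum>s\<in>Pow T. (-1) ^ card s) = (0::'a) ^ card T"
    using prod_diff_conv_sum[OF assms(1), of "\<lambda>_. 1::'a" "\<lambda>_. 1"] by simp
  then have "(\<Sum>s\<in>Pow T. (-1) ^ card s) = (0::'a)"
    using assms by (simp add: card_gt_0_iff zero_power)
  moreover have "(-1) ^ card s = - ((-1) ^ (card s - 1) :: 'a)" if "s \<in> Pow T - {{}}" for s
    using that assms(1) by (cases "card s") (auto dest: finite_subset)
  ultimately show ?thesis
    using assms(1) by (simp add: sum.remove[of "Pow T" "{}"] sum_negf)
qed

lemma nerve_euler_Inter_nonempty:
  assumes "finite I" "I \<noteq> {}" "\<Inter>(U ` I) \<noteq> {}"
  shows "nerve_euler I U = 1"
proof -
  have "nerve I U = Pow I - {{}}"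
    using assms(3) unfolding nerve_finite_eq[OF assms(1)] by blast
  then show ?thesis
    unfolding nerve_euler_def using sum_Pow_nonempty_minus_one_power[OF assms(1,2)] by simp
qed

lemma closest_point_eq_iff:
  fixes S :: "'a::euclidean_space set"
  assumes "convex S" "closed S" "S \<noteq> {}"
  shows "closest_point S a = y \<longleftrightarrow> y \<in> S \<and> (\<forall>c\<in>S. inner (a - y) (c - y) \<le> 0)"
proof
  assume "closest_point S a = y"
  then show "y \<in> S \<and> (\<forall>c\<in>S. inner (a - y) (c - y) \<le> 0)"
    using assms closest_point_in_set closest_point_dot by blast
next
  assume y: "y \<in> S \<and> (\<forall>c\<in>S. inner (a - y) (c - y) \<le> 0)"
  have "dist a y \<le> dist a c" if "c \<in> S" for c
  proof -
    have "(dist a c)\<^sup>2 = (norm (a - y))\<^sup>2 - 2 * inner (a - y) (c - y) + (norm (c - y))\<^sup>2"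
      using dot_norm_neg[of "a - y" "c - y"] by (simp add: dist_norm)
    then have "(dist a y)\<^sup>2 \<le> (dist a c)\<^sup>2"
      using y that by (simp add: dist_norm) (smt (verit) zero_le_power2)
    then show ?thesis
      by (simp add: power2_le_iff_abs_le)
  qed
  then show "closest_point S a = y"
    using closest_point_unique[OF assms(1,2)] y by metis
qed

lemma convex_segment_point_in_cball:
  fixes S :: "'a::real_normed_vector set"
  assumes "convex S" "y \<in> S" "c \<in> S" "0 < \<rho>"
  obtains \<theta> where "0 < \<theta>" "y + \<theta> *\<^sub>R (c - y) \<in> S \<inter> cball y \<rho>"
proof (cases "c = y")
  case True
  then show ?thesis
    using assms that[of 1] by simp
next
  case False
  define \<theta> where "\<theta> = min 1 (\<rho> / norm (c - y))"
  have \<theta>: "0 < \<theta>" "\<theta> \<le> 1" "\<theta> * norm (c - y) \<le> \<rho>"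
    unfolding \<theta>_def using assms(4) False by (auto simp: min_def field_simps)
  have "y + \<theta> *\<^sub>R (c - y) = (1 - \<theta>) *\<^sub>R y + \<theta> *\<^sub>R c"
    by (simp add: algebra_simps)
  then have "y + \<theta> *\<^sub>R (c - y) \<in> S"
    using convexD_alt[OF assms(1-3)] \<theta> by simp
  moreover have "y + \<theta> *\<^sub>R (c - y) \<in> cball y \<rho>"
    using \<theta> by (simp add: dist_norm)
  ultimately show ?thesis
    using that \<theta>(1) by blast
qed

lemma halfspace_cap_detects_positive_direction:
  fixes U :: "'i \<Rightarrow> 'a::euclidean_space set"
  assumes "finite T" "\<forall>i\<in>T. convex (U i) \<and> y \<in> U i" "0 < \<rho>" "0 < b"
  obtains t where "0 < t" "t \<le> b"
    "\<And>s. s \<subseteq> T \<Longrightarrow> (\<forall>c\<in>\<Inter>(U ` s). inner a (c - y) \<le> 0) \<longleftrightarrow>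
       \<Inter>(U ` s) \<inter> cball y \<rho> \<inter> {c. t \<le> inner a (c - y)} = {}"
proof -
  define W where "W = {s\<in>Pow T. \<exists>c\<in>\<Inter>(U ` s). 0 < inner a (c - y)}"
  have "\<exists>w. w \<in> \<Inter>(U ` s) \<inter> cball y \<rho> \<and> 0 < inner a (w - y)" if sW: "s \<in> W" for s
  proof -
    obtain c where c: "c \<in> \<Inter>(U ` s)" "0 < inner a (c - y)"
      using sW by (auto simp: W_def)
    have "convex (\<Inter>(U ` s))" "y \<in> \<Inter>(U ` s)"
      using sW assms(2) by (auto simp: W_def intro!: convex_INT)
    then obtain \<theta> where "0 < \<theta>" "y + \<theta> *\<^sub>R (c - y) \<in> \<Inter>(U ` s) \<inter> cball y \<rho>"
      using convex_segment_point_in_cball c(1) assms(3) by metis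
    then show ?thesis
      using c(2) by (intro exI[of _ "y + \<theta> *\<^sub>R (c - y)"]) auto
  qed
  then obtain w where w: "\<And>s. s \<in> W \<Longrightarrow> w s \<in> \<Inter>(U ` s) \<inter> cball y \<rho> \<and> 0 < inner a (w s - y)"
    by metis
  define t where "t = Min (insert b ((\<lambda>s. inner a (w s - y)) ` W))"
  have fin: "finite W"
    using assms(1) by (simp add: W_def)
  have t_le_w: "t \<le> inner a (w s - y)" if "s \<in> W" for s
    using fin that by (simp add: t_def)
  have "0 < t"
    using fin w assms(4) by (simp add: t_def)
  moreover have "t \<le> b"
    using fin by (simp add: t_def)
  moreover have "(\<forall>c\<in>\<Inter>(U ` s). inner a (c - y) \<le> 0) \<longleftrightarrow>
      \<Inter>(U ` s) \<inter> cball y \<rho> \<inter> {c. t \<le> inner a (c - y)} = {}" if "s \<subseteq> T" for s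
  proof
    assume "\<forall>c\<in>\<Inter>(U ` s). inner a (c - y) \<le> 0"
    then show "\<Inter>(U ` s) \<inter> cball y \<rho> \<inter> {c. t \<le> inner a (c - y)} = {}"
      using \<open>0 < t\<close> by fastforce
  next
    assume empty: "\<Inter>(U ` s) \<inter> cball y \<rho> \<inter> {c. t \<le> inner a (c - y)} = {}"
    show "\<forall>c\<in>\<Inter>(U ` s). inner a (c - y) \<le> 0"
    proof (rule ccontr)
      assume "\<not> (\<forall>c\<in>\<Inter>(U ` s). inner a (c - y) \<le> 0)"
      then have "s \<in> W"
        using that by (auto simp: W_def not_le)
      then show False
        using w[of s] t_le_w[of s] empty by blast
    qed
  qed
  ultimately show ?thesis
    using that by blast
qed

text \<open>The witness is U i cut down to a small ball around y and to a halfspace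
  {c. t \<le> inner (z - y) (c - y)} with t > 0 small.\<close>

lemma convex_cover_localize:
  fixes U :: "'i \<Rightarrow> 'a::euclidean_space set"
  assumes finI: "finite I" and cc: "\<forall>i\<in>I. closed (U i) \<and> convex (U i)"
    and cvx: "convex (\<Union>(U ` I))" and z: "z \<in> \<Union>(U ` I)" and "y \<noteq> z"
    and T: "T = {i\<in>I. y \<in> U i}" "T \<noteq> {}"
  obtains D :: "'i \<Rightarrow> 'a set" where "\<forall>i\<in>T. closed (D i) \<and> convex (D i)" "convex (\<Union>(D ` T))" "\<Union>(D ` T) \<noteq> {}"
    "\<And>s. s \<subseteq> T \<Longrightarrow> s \<noteq> {} \<Longrightarrow> \<Inter>(D ` s) = {} \<longleftrightarrow> (\<forall>c\<in>\<Inter>(U ` s). inner (z - y) (c - y) \<le> 0)"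
proof -
  have "open (- \<Union>(U ` (I - T)))"
    using cc finI by (intro open_Compl closed_UN) auto
  moreover have "y \<in> - \<Union>(U ` (I - T))"
    using T(1) by auto
  ultimately obtain \<rho> where \<rho>: "0 < \<rho>" "cball y \<rho> \<subseteq> - \<Union>(U ` (I - T))"
    by (metis open_contains_cball)
  have "y \<in> \<Union>(U ` I)"
    using T by auto
  then obtain \<mu> where \<mu>: "0 < \<mu>" "y + \<mu> *\<^sub>R (z - y) \<in> \<Union>(U ` I) \<inter> cball y \<rho>"
    by (rule convex_segment_point_in_cball[OF cvx _ z \<rho>(1)])
  define q where "q = y + \<mu> *\<^sub>R (z - y)"
  have "finite T" "\<forall>i\<in>T. convex (U i) \<and> y \<in> U i"
    using finI cc T(1) by auto
  moreover have "0 < inner (z - y) (q - y)"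
    using \<mu>(1) \<open>y \<noteq> z\<close> by (simp add: q_def)
  ultimately obtain t where t: "0 < t" "t \<le> inner (z - y) (q - y)"
    "\<And>s. s \<subseteq> T \<Longrightarrow> (\<forall>c\<in>\<Inter>(U ` s). inner (z - y) (c - y) \<le> 0) \<longleftrightarrow>
       \<Inter>(U ` s) \<inter> cball y \<rho> \<inter> {c. t \<le> inner (z - y) (c - y)} = {}"
    by (rule halfspace_cap_detects_positive_direction[where a = "z - y", OF _ _ \<rho>(1)], auto)
  define H where "H = {c. t \<le> inner (z - y) (c - y)}"
  have H_eq: "H = {c. t + inner (z - y) y \<le> inner (z - y) c}"
    by (auto simp: H_def inner_diff_right)
  define D where "D i = U i \<inter> cball y \<rho> \<inter> H" for i
  have DT: "\<Union>(D ` T) = \<Union>(U ` I) \<inter> cball y \<rho> \<inter> H"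
    using \<rho>(2) T(1) by (auto simp: D_def)
  show thesis
  proof (rule that)
    show "\<forall>i\<in>T. closed (D i) \<and> convex (D i)"
      using cc T(1) unfolding D_def H_eq
      by (auto intro!: convex_Int closed_halfspace_ge convex_halfspace_ge)
    show "convex (\<Union>(D ` T))"
      unfolding DT H_eq by (intro convex_Int cvx convex_cball convex_halfspace_ge)
    show "\<Union>(D ` T) \<noteq> {}"
      unfolding DT using \<mu>(2) t(2) by (auto simp: H_def q_def)
    show "\<Inter>(D ` s) = {} \<longleftrightarrow> (\<forall>c\<in>\<Inter>(U ` s). inner (z - y) (c - y) \<le> 0)"
      if "s \<subseteq> T" "s \<noteq> {}" for s
    proof -
      have "\<Inter>(D ` s) = \<Inter>(U ` s) \<inter> cball y \<rho> \<inter> H"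
        using that(2) by (auto simp: D_def)
      then show ?thesis
        using t(3)[OF that(1)] by (simp add: H_def)
    qed
  qed
qed

lemma nerve_closest_point_fiber:
  fixes U :: "'i \<Rightarrow> 'a::euclidean_space set"
  assumes "finite I" "\<forall>i\<in>I. closed (U i) \<and> convex (U i)"
  shows "{s\<in>nerve I U. closest_point (\<Inter>(U ` s)) z = y} =
    {s\<in>Pow {i\<in>I. y \<in> U i} - {{}}. \<forall>c\<in>\<Inter>(U ` s). inner (z - y) (c - y) \<le> 0}"
proof -
  have closest: "closest_point (\<Inter>(U ` s)) z = y \<longleftrightarrow>
      y \<in> \<Inter>(U ` s) \<and> (\<forall>c\<in>\<Inter>(U ` s). inner (z - y) (c - y) \<le> 0)"
    if "s \<subseteq> I" "\<Inter>(U ` s) \<noteq> {}" for s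
    using that assms(2) by (intro closest_point_eq_iff convex_INT closed_INT) auto
  have "s \<in> {s\<in>nerve I U. closest_point (\<Inter>(U ` s)) z = y} \<longleftrightarrow>
      s \<in> {s\<in>Pow {i\<in>I. y \<in> U i} - {{}}. \<forall>c\<in>\<Inter>(U ` s). inner (z - y) (c - y) \<le> 0}" for s
  proof (cases "s \<subseteq> I \<and> \<Inter>(U ` s) \<noteq> {}")
    case True
    then show ?thesis
      using closest[of s] by (auto simp: nerve_finite_eq[OF assms(1)])
  qed (auto simp: nerve_finite_eq[OF assms(1)])
  then show ?thesis
    by (rule set_eqI)
qed

text \<open>The induction step of nerve_euler_convex_Union: by convex_cover_localize, a fibre
  over y \<noteq> z is the complement of a nerve on fewer sets.\<close>

lemma sum_nerve_closest_point_fiber: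
  fixes U :: "'i \<Rightarrow> 'a::euclidean_space set"
  assumes finI: "finite I" and cc: "\<forall>i\<in>I. closed (U i) \<and> convex (U i)"
    and cvx: "convex (\<Union>(U ` I))" and z: "z \<in> \<Union>(U ` I)" and "\<Inter>(U ` I) = {}"
    and y: "y \<in> (\<lambda>s. closest_point (\<Inter>(U ` s)) z) ` nerve I U"
    and IH: "\<And>T (D :: 'i \<Rightarrow> 'a set). T \<subset> I \<Longrightarrow> \<forall>i\<in>T. closed (D i) \<and> convex (D i) \<Longrightarrow>
               convex (\<Union>(D ` T)) \<Longrightarrow> \<Union>(D ` T) \<noteq> {} \<Longrightarrow> nerve_euler T D = 1"
  shows "(\<Sum>s | s \<in> nerve I U \<and> closest_point (\<Inter>(U ` s)) z = y. (-1::int) ^ (card s - 1)) =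
    (if y = z then 1 else 0)"
proof -
  define T where "T = {i\<in>I. y \<in> U i}"
  have fiber: "{s. s \<in> nerve I U \<and> closest_point (\<Inter>(U ` s)) z = y} =
      {s\<in>Pow T - {{}}. \<forall>c\<in>\<Inter>(U ` s). inner (z - y) (c - y) \<le> 0}"
    using nerve_closest_point_fiber[OF finI cc] by (simp add: T_def)
  have "T \<noteq> {}"
    using y fiber by fastforce
  have finT: "finite T"
    using finI by (simp add: T_def)
  show ?thesis
  proof (cases "y = z")
    case True
    then have "{s. s \<in> nerve I U \<and> closest_point (\<Inter>(U ` s)) z = y} = Pow T - {{}}"
      using fiber by auto
    then show ?thesis
      using True sum_Pow_nonempty_minus_one_power[OF finT \<open>T \<noteq> {}\<close>] by simp
  next
    case False
    obtain D :: "'i \<Rightarrow> 'a set" where D: "\<forall>i\<in>T. closed (D i) \<and> convex (D i)"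
      "convex (\<Union>(D ` T))" "\<Union>(D ` T) \<noteq> {}"
      "\<And>s. s \<subseteq> T \<Longrightarrow> s \<noteq> {} \<Longrightarrow> \<Inter>(D ` s) = {} \<longleftrightarrow> (\<forall>c\<in>\<Inter>(U ` s). inner (z - y) (c - y) \<le> 0)"
      using convex_cover_localize[OF finI cc cvx z False T_def \<open>T \<noteq> {}\<close>] by blast
    have "T \<subset> I"
      using \<open>\<Inter>(U ` I) = {}\<close> \<open>T \<noteq> {}\<close> by (auto simp: T_def)
    then have "nerve_euler T D = 1"
      using D(1-3) by (rule IH)
    moreover have "(\<forall>c\<in>\<Inter>(U ` s). inner (z - y) (c - y) \<le> 0) \<longleftrightarrow> s \<notin> nerve T D"
      if "s \<in> Pow T - {{}}" for s
      using D(4)[of s] that by (simp add: nerve_finite_eq[OF finT])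
    then have "{s. s \<in> nerve I U \<and> closest_point (\<Inter>(U ` s)) z = y} = (Pow T - {{}}) - nerve T D"
      unfolding fiber by blast
    moreover have "nerve T D \<subseteq> Pow T - {{}}"
      by (auto simp: nerve_finite_eq[OF finT])
    ultimately show ?thesis
      using False sum_Pow_nonempty_minus_one_power[OF finT \<open>T \<noteq> {}\<close>] finT
      by (simp add: sum_diff nerve_euler_def)
  qed
qed

lemma nerve_euler_convex_Union:
  fixes U :: "'i \<Rightarrow> 'a::euclidean_space set"
  assumes "finite I" "\<forall>i\<in>I. closed (U i) \<and> convex (U i)"
    and "convex (\<Union>(U ` I))" "\<Union>(U ` I) \<noteq> {}"
  shows "nerve_euler I U = 1"
  using assms
proof (induction "card I" arbitrary: I U rule: less_induct)
  case less
  note finI = less.prems(1) and cc = less.prems(2)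
  show ?case
  proof (cases "\<Inter>(U ` I) = {}")
    case False
    have "I \<noteq> {}"
      using less.prems(4) by auto
    then show ?thesis
      using nerve_euler_Inter_nonempty[OF finI _ False] by simp
  next
    case True
    obtain z i where z: "i \<in> I" "z \<in> U i"
      using less.prems(4) by blast
    define p where "p s = closest_point (\<Inter>(U ` s)) z" for s
    have "{i} \<in> nerve I U" "p {i} = z"
      using z cc by (auto simp: nerve_finite_eq[OF finI] p_def closest_point_self)
    then have z_image: "z \<in> p ` nerve I U"
      by (metis image_eqI)
    have IH: "nerve_euler T D = 1"
      if "T \<subset> I" "\<forall>i\<in>T. closed (D i) \<and> convex (D i)" "convex (\<Union>(D ` T))" "\<Union>(D ` T) \<noteq> {}"
      for T and D :: "'i \<Rightarrow> 'a set"
      using that finI by (intro less.hyps psubset_card_mono) (auto intro: finite_subset)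
    have "nerve_euler I U = (\<Sum>y\<in>p ` nerve I U. \<Sum>s | s \<in> nerve I U \<and> p s = y. (-1) ^ (card s - 1))"
      unfolding nerve_euler_def using finI by (intro sum.image_gen) simp
    also have "\<dots> = (\<Sum>y\<in>p ` nerve I U. if y = z then 1 else 0)"
      unfolding p_def using less.prems z True IH
      by (intro sum.cong refl sum_nerve_closest_point_fiber) auto
    also have "\<dots> = 1"
      using finI z_image by simp
    finally show ?thesis .
  qed
qed

lemma nerve_Int_left: "nerve J (\<lambda>j. C \<inter> B j) = {t\<in>nerve J B. C \<inter> \<Inter>(B ` t) \<noteq> {}}"
proof -
  have "\<Inter>((\<lambda>j. C \<inter> B j) ` t) = C \<inter> \<Inter>(B ` t)" if "t \<noteq> {}" for t
    using that by auto
  then show ?thesis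
    unfolding nerve_def by auto
qed

lemma nerve_euler_double_count:
  fixes A :: "'i \<Rightarrow> 'a::euclidean_space set" and B :: "'j \<Rightarrow> 'a set"
  assumes "finite J" "\<forall>i\<in>I. closed (A i) \<and> convex (A i)" "\<forall>j\<in>J. closed (B j) \<and> convex (B j)"
    and "\<Union>(A ` I) \<subseteq> \<Union>(B ` J)"
  shows "nerve_euler I A = (\<Sum>s\<in>nerve I A. \<Sum>t\<in>nerve J B.
           if \<Inter>(A ` s) \<inter> \<Inter>(B ` t) \<noteq> {} then (-1) ^ (card s - 1) * (-1) ^ (card t - 1) else 0)"
proof -
  have inner_sum: "(\<Sum>t\<in>nerve J B. if \<Inter>(A ` s) \<inter> \<Inter>(B ` t) \<noteq> {} then (-1::int) ^ (card t - 1) else 0) = 1"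
    if s: "s \<in> nerve I A" for s
  proof -
    define C where "C = \<Inter>(A ` s)"
    have "closed C"
      unfolding C_def using s assms(2) by (intro closed_INT) (auto simp: nerve_def)
    moreover have "convex C"
      unfolding C_def using s assms(2) by (intro convex_INT) (auto simp: nerve_def)
    moreover have "C \<noteq> {}" "C \<subseteq> \<Union>(B ` J)"
      using s assms(4) by (auto simp: C_def nerve_def)
    moreover from this have "\<Union>((\<lambda>j. C \<inter> B j) ` J) = C"
      by blast
    ultimately have "nerve_euler J (\<lambda>j. C \<inter> B j) = 1"
      using assms(1,3) by (intro nerve_euler_convex_Union) (auto intro!: convex_Int)
    have "(\<Sum>t\<in>nerve J B. if C \<inter> \<Inter>(B ` t) \<noteq> {} then (-1::int) ^ (card t - 1) else 0) =
        nerve_euler J (\<lambda>j. C \<inter> B j)"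
      unfolding nerve_euler_def nerve_Int_left using assms(1) by (intro sum.inter_filter[symmetric]) simp
    then show ?thesis
      using \<open>nerve_euler J (\<lambda>j. C \<inter> B j) = 1\<close> by (simp add: C_def)
  qed
  have "(if P then a * b else 0) = a * (if P then b else 0)" for P and a b :: int
    by simp
  then show ?thesis
    unfolding nerve_euler_def by (simp add: sum_distrib_left[symmetric] inner_sum)
qed

lemma nerve_euler_eq_if_Union_eq:
  fixes A :: "'i \<Rightarrow> 'a::euclidean_space set" and B :: "'j \<Rightarrow> 'a set"
  assumes "finite I" "finite J"
    and "\<forall>i\<in>I. closed (A i) \<and> convex (A i)" "\<forall>j\<in>J. closed (B j) \<and> convex (B j)"
    and "\<Union>(A ` I) = \<Union>(B ` J)"
  shows "nerve_euler I A = nerve_euler J B"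
proof -
  have "nerve_euler I A = (\<Sum>s\<in>nerve I A. \<Sum>t\<in>nerve J B.
           if \<Inter>(A ` s) \<inter> \<Inter>(B ` t) \<noteq> {} then (-1) ^ (card s - 1) * (-1) ^ (card t - 1) else 0)"
    using assms by (intro nerve_euler_double_count) auto
  also have "\<dots> = (\<Sum>t\<in>nerve J B. \<Sum>s\<in>nerve I A.
           if \<Inter>(B ` t) \<inter> \<Inter>(A ` s) \<noteq> {} then (-1) ^ (card t - 1) * (-1) ^ (card s - 1) else 0)"
    by (subst sum.swap) (intro sum.cong refl, simp add: Int_commute mult.commute)
  also have "\<dots> = nerve_euler J B"
    using assms by (intro nerve_euler_double_count[symmetric]) auto
  finally show ?thesis .
qed

section \<open>Alpha and Cech complexes\<close>

lemma euler_char_nerve: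
  assumes "finite I" "card I \<le> n"
  shows "euler_char (nerve I U) n = nerve_euler I U"
proof -
  have card_simplex: "0 < card s \<and> card s \<le> n" if "s \<in> nerve I U" for s
    using that assms by (auto simp: nerve_finite_eq card_gt_0_iff intro: finite_subset card_mono order_trans)
  have "nerve_euler I U = (\<Sum>i<n. \<Sum>s | s \<in> nerve I U \<and> card s - 1 = i. (-1::int) ^ (card s - 1))"
    unfolding nerve_euler_def using assms(1) card_simplex
    by (intro sum.group[symmetric]) force+
  also have "\<dots> = (\<Sum>i<n. (-1) ^ i * int (num_simplices (nerve I U) i))"
  proof (rule sum.cong[OF refl])
    fix i
    have "{s. s \<in> nerve I U \<and> card s - 1 = i} = {s\<in>nerve I U. card s = Suc i}"
      using card_simplex by force
    then show "(\<Sum>s | s \<in> nerve I U \<and> card s - 1 = i. (-1::int) ^ (card s - 1)) =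
        (-1) ^ i * int (num_simplices (nerve I U) i)"
      by (simp add: num_simplices_def)
  qed
  finally show ?thesis
    by (simp add: euler_char_def)
qed

lemma halfspace_dist_le_dist:
  fixes a b :: "'a::euclidean_space"
  shows "{x. dist x a \<le> dist x b} = {x. inner (2 *\<^sub>R (b - a)) x \<le> inner b b - inner a a}"
proof -
  have sq: "(dist x c)\<^sup>2 = inner x x - 2 * inner c x + inner c c" for x c :: 'a
    using dot_norm_neg[of x c] by (simp add: dist_norm power2_norm_eq_inner inner_commute)
  have "dist x a \<le> dist x b \<longleftrightarrow> (dist x a)\<^sup>2 \<le> (dist x b)\<^sup>2" for x
    by (simp add: power2_le_iff_abs_le)
  also have "\<dots> x \<longleftrightarrow> inner (2 *\<^sub>R (b - a)) x \<le> inner b b - inner a a" for x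
    unfolding sq inner_scaleR_left inner_diff_left by argo
  finally show ?thesis
    by blast
qed

lemma voronoi_cell_eq_INT: "voronoi_cell P M i = (\<Inter>j<M. {x. dist x (P i) \<le> dist x (P j)})"
  by (auto simp: voronoi_cell_def)

lemma closed_voronoi_cell: "closed (voronoi_cell P M i)"
  unfolding voronoi_cell_eq_INT halfspace_dist_le_dist by (intro closed_INT ballI closed_halfspace_le)

lemma convex_voronoi_cell: "convex (voronoi_cell P M i)"
  unfolding voronoi_cell_eq_INT halfspace_dist_le_dist by (intro convex_INT convex_halfspace_le)

lemma Union_voronoi_cell_Int_cball:
  "(\<Union>i<M. voronoi_cell P M i \<inter> cball (P i) r) = (\<Union>i<M. cball (P i) r)"
proof
  show "(\<Union>i<M. cball (P i) r) \<subseteq> (\<Union>i<M. voronoi_cell P M i \<inter> cball (P i) r)"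
  proof
    fix y
    assume "y \<in> (\<Union>i<M. cball (P i) r)"
    then obtain i where i: "i < M" "dist (P i) y \<le> r"
      by auto
    obtain k where "is_arg_min (\<lambda>j. dist y (P j)) (\<lambda>j. j \<in> {..<M}) k"
      using ex_is_arg_min_if_finite[of "{..<M}"] i(1) by blast
    then have k: "k < M" "\<forall>j<M. dist y (P k) \<le> dist y (P j)"
      by (auto simp: is_arg_min_linorder)
    then have "y \<in> voronoi_cell P M k \<inter> cball (P k) r"
      using i by (auto simp: voronoi_cell_def dist_commute intro: order_trans)
    then show "y \<in> (\<Union>i<M. voronoi_cell P M i \<inter> cball (P i) r)"
      using k(1) by blast
  qed
qed auto

lemma ecc_eq_nerve_euler_cball: "ecc P M r = nerve_euler {..<M} (\<lambda>i. cball (P i) r)"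
proof -
  have "ecc P M r = nerve_euler {..<M} (\<lambda>i. voronoi_cell P M i \<inter> cball (P i) r)"
    by (simp add: ecc_def alpha_complex_def euler_char_nerve)
  also have "\<dots> = nerve_euler {..<M} (\<lambda>i. cball (P i) r)"
    by (rule nerve_euler_eq_if_Union_eq)
      (auto simp: Union_voronoi_cell_Int_cball closed_voronoi_cell convex_voronoi_cell intro!: convex_Int)
  finally show ?thesis .
qed

section \<open>Stability under perturbation of the points\<close>

definition cech_scales :: "(nat \<Rightarrow> 'a::metric_space) \<Rightarrow> nat set \<Rightarrow> real set" where
  "cech_scales P s = {r. (\<Inter>i\<in>s. cball (P i) r) \<noteq> {}}"

lemma cech_scales_up_closed:
  assumes "r \<in> cech_scales P s" "r \<le> r'"
  shows "r' \<in> cech_scales P s"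
proof -
  have "(\<Inter>i\<in>s. cball (P i) r) \<subseteq> (\<Inter>i\<in>s. cball (P i) r')"
    using assms(2) by auto
  then show ?thesis
    using assms(1) by (auto simp: cech_scales_def)
qed

lemma cech_scales_nonneg:
  assumes "s \<noteq> {}" "r \<in> cech_scales P s"
  shows "0 \<le> r"
proof -
  obtain i c where "i \<in> s" "c \<in> cball (P i) r"
    using assms unfolding cech_scales_def by blast
  then show ?thesis
    by (meson mem_cball order_trans zero_le_dist)
qed

lemma cech_scales_perturb:
  assumes "\<forall>i\<in>s. dist (P i) (Q i) \<le> \<delta>" "r \<in> cech_scales P s"
  shows "r + \<delta> \<in> cech_scales Q s"
proof -
  obtain c where c: "\<forall>i\<in>s. dist (P i) c \<le> r"
    using assms(2) by (auto simp: cech_scales_def)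
  have "dist (Q i) c \<le> r + \<delta>" if "i \<in> s" for i
  proof -
    have "dist (Q i) (P i) \<le> \<delta>" "dist (P i) c \<le> r"
      using assms(1) c that by (auto simp: dist_commute)
    then show ?thesis
      using dist_triangle[of "Q i" c "P i"] by linarith
  qed
  then have "c \<in> (\<Inter>i\<in>s. cball (Q i) (r + \<delta>))"
    by simp
  then show ?thesis
    unfolding cech_scales_def by blast
qed

lemma ecc_eq_sum_cech_scales:
  "ecc P M r = (\<Sum>s\<in>Pow {..<M} - {{}}. if r \<in> cech_scales P s then (-1) ^ (card s - 1) else 0)"
  unfolding ecc_eq_nerve_euler_cball nerve_euler_def nerve_finite_eq[OF finite_lessThan]
  by (subst sum.inter_filter) (auto simp: cech_scales_def)

lemma up_closed_shift_sym_diff: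
  fixes A B :: "real set"
  assumes "\<And>r r'. r \<in> A \<Longrightarrow> r \<le> r' \<Longrightarrow> r' \<in> A" "\<And>r r'. r \<in> B \<Longrightarrow> r \<le> r' \<Longrightarrow> r' \<in> B"
    and "\<And>r. r \<in> A \<Longrightarrow> r + d \<in> B" "\<And>r. r \<in> B \<Longrightarrow> r + d \<in> A"
    and "bdd_below (A \<union> B)" "0 \<le> d"
  obtains a where "sym_diff A B \<subseteq> {a..a + d}"
proof
  define a where "a = Inf (A \<union> B)"
  show "sym_diff A B \<subseteq> {a..a + d}"
  proof
    fix r
    assume r: "r \<in> sym_diff A B"
    then have "a \<le> r"
      unfolding a_def using assms(5) by (auto intro: cInf_lower)
    moreover have "\<not> a + d < r"
    proof
      assume "a + d < r"
      then obtain r0 where r0: "r0 \<in> A \<union> B" "r0 < r - d"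
        using r assms(5) cInf_less_iff[of "A \<union> B" "r - d"] by (auto simp: a_def)
      then have "r0 \<le> r" "r0 + d \<le> r"
        using assms(6) by auto
      then have "r \<in> A \<and> r \<in> B"
        using r0(1) assms(1-4) by blast
      then show False
        using r by blast
    qed
    ultimately show "r \<in> {a..a + d}"
      by simp
  qed
qed

lemma cech_scales_sym_diff_perturb:
  assumes "s \<noteq> {}" "\<forall>i\<in>s. dist (P i) (Q i) \<le> \<delta>" "0 \<le> \<delta>"
  obtains a where "sym_diff (cech_scales P s) (cech_scales Q s) \<subseteq> {a..a + \<delta>}"
proof -
  have QP: "\<forall>i\<in>s. dist (Q i) (P i) \<le> \<delta>"
    using assms(2) by (simp add: dist_commute)
  have bdd: "bdd_below (cech_scales P s \<union> cech_scales Q s)"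
    using cech_scales_nonneg[OF assms(1)] by (intro bdd_belowI[of _ 0]) blast
  show thesis
    by (rule up_closed_shift_sym_diff[of "cech_scales P s" "cech_scales Q s" \<delta>, OF _ _ _ _ bdd assms(3) that])
      (auto intro: cech_scales_up_closed cech_scales_perturb[OF assms(2)] cech_scales_perturb[OF QP])
qed

lemma abs_ecc_diff_le_sum_indicator:
  assumes "\<And>s. s \<in> Pow {..<M} - {{}} \<Longrightarrow>
    sym_diff (cech_scales P s) (cech_scales Q s) \<subseteq> {a s..a s + \<delta>}"
  shows "\<bar>real_of_int (ecc P M r - ecc Q M r)\<bar> \<le> (\<Sum>s\<in>Pow {..<M} - {{}}. indicator {a s..a s + \<delta>} r)"
proof -
  let ?sg = "\<lambda>P s. if r \<in> cech_scales P s then (-1::int) ^ (card s - 1) else 0"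
  have "\<bar>real_of_int (ecc P M r - ecc Q M r)\<bar> =
      \<bar>\<Sum>s\<in>Pow {..<M} - {{}}. real_of_int (?sg P s - ?sg Q s)\<bar>"
    by (simp add: ecc_eq_sum_cech_scales sum_subtractf)
  also have "\<dots> \<le> (\<Sum>s\<in>Pow {..<M} - {{}}. \<bar>real_of_int (?sg P s - ?sg Q s)\<bar>)"
    by (rule sum_abs)
  also have "\<dots> \<le> (\<Sum>s\<in>Pow {..<M} - {{}}. indicator {a s..a s + \<delta>} r)"
    using assms by (intro sum_mono) (auto simp: indicator_def subset_iff)
  finally show ?thesis .
qed

lemma nn_integral_ecc_diff_le:
  assumes "0 \<le> \<delta>" "\<forall>i<M. dist (x i) (x' i) \<le> \<delta>"
  shows "(\<integral>\<^sup>+ r. ennreal \<bar>real_of_int (ecc x M r - ecc x' M r)\<bar> \<partial>lborel) \<le> ennreal ((2 ^ M - 1) * \<delta>)"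
proof -
  define S where "S = Pow {..<M} - {{}}"
  have "\<exists>a. sym_diff (cech_scales x s) (cech_scales x' s) \<subseteq> {a..a + \<delta>}" if "s \<in> S" for s
  proof -
    have "s \<noteq> {}" "\<forall>i\<in>s. dist (x i) (x' i) \<le> \<delta>"
      using that assms(2) by (auto simp: S_def)
    then obtain a where "sym_diff (cech_scales x s) (cech_scales x' s) \<subseteq> {a..a + \<delta>}"
      using assms(1) by (rule cech_scales_sym_diff_perturb)
    then show ?thesis
      by blast
  qed
  then obtain a where a: "\<And>s. s \<in> S \<Longrightarrow>
      sym_diff (cech_scales x s) (cech_scales x' s) \<subseteq> {a s..a s + \<delta>}"
    by metis
  have "(\<integral>\<^sup>+ r. ennreal \<bar>real_of_int (ecc x M r - ecc x' M r)\<bar> \<partial>lborel)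
      \<le> (\<integral>\<^sup>+ r. (\<Sum>s\<in>S. indicator {a s..a s + \<delta>} r) \<partial>lborel)"
  proof (rule nn_integral_mono)
    fix r
    have "ennreal \<bar>real_of_int (ecc x M r - ecc x' M r)\<bar> \<le> ennreal (\<Sum>s\<in>S. indicator {a s..a s + \<delta>} r)"
      using a unfolding S_def by (intro ennreal_leI abs_ecc_diff_le_sum_indicator)
    also have "\<dots> = (\<Sum>s\<in>S. indicator {a s..a s + \<delta>} r)"
      by (simp add: ennreal_indicator flip: sum_ennreal)
    finally show "ennreal \<bar>real_of_int (ecc x M r - ecc x' M r)\<bar> \<le> (\<Sum>s\<in>S. indicator {a s..a s + \<delta>} r)" .
  qed
  also have "\<dots> = (\<Sum>s\<in>S. \<integral>\<^sup>+ r. indicator {a s..a s + \<delta>} r \<partial>lborel)"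
    by (rule nn_integral_sum) simp
  also have "\<dots> = ennreal (card S * \<delta>)"
    using assms(1) by (simp add: ennreal_of_nat_eq_real_of_nat ennreal_mult')
  also have "card S = 2 ^ M - 1"
    by (simp add: S_def card_Diff_singleton card_Pow)
  finally show ?thesis
    by simp
qed

theorem mainTheorem1:
  fixes x :: "nat \<Rightarrow> real^3" and M :: nat and \<epsilon> :: real
  assumes distinct: "inj_on x {..<M}"
    and eps_pos: "0 < \<epsilon>"
    and eps_small: "\<forall>i<M. \<forall>j<M. i \<noteq> j \<longrightarrow> 2 * \<epsilon> < dist (x i) (x j)"
  shows "\<exists>\<delta>>0. \<forall>x' :: nat \<Rightarrow> real^3. (\<forall>i<M. dist (x i) (x' i) \<le> \<delta>) \<longrightarrow>
           (\<integral>\<^sup>+ r. indicator {0..} r * ennreal \<bar>real_of_int (ecc x M r - ecc x' M r)\<bar> \<partial>lborel)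
             \<le> ennreal (real M ^ 4 * \<epsilon> / 4)"
proof -
  define \<delta> where "\<delta> = \<epsilon> / 2 ^ (M + 2)"
  have "0 < \<delta>"
    using eps_pos by (simp add: \<delta>_def)
  have bound: "(2 ^ M - 1) * \<delta> \<le> real M ^ 4 * \<epsilon> / 4"
  proof (cases "M = 0")
    case False
    have "(2 ^ M - 1) * \<delta> \<le> 2 ^ M * \<delta>"
      using \<open>0 < \<delta>\<close> by simp
    also have "\<dots> = \<epsilon> / 4"
      by (simp add: \<delta>_def power_add)
    also have "\<dots> \<le> real M ^ 4 * \<epsilon> / 4"
      using False eps_pos by simp
    finally show ?thesis .
  qed simp
  show ?thesis
  proof (intro exI[of _ \<delta>] conjI allI impI \<open>0 < \<delta>\<close>)
    fix x' :: "nat \<Rightarrow> real^3"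
    assume "\<forall>i<M. dist (x i) (x' i) \<le> \<delta>"
    have "(\<integral>\<^sup>+ r. indicator {0..} r * ennreal \<bar>real_of_int (ecc x M r - ecc x' M r)\<bar> \<partial>lborel)
        \<le> (\<integral>\<^sup>+ r. ennreal \<bar>real_of_int (ecc x M r - ecc x' M r)\<bar> \<partial>lborel)"
      by (intro nn_integral_mono) (simp add: indicator_def)
    also have "\<dots> \<le> ennreal ((2 ^ M - 1) * \<delta>)"
      using \<open>0 < \<delta>\<close> \<open>\<forall>i<M. dist (x i) (x' i) \<le> \<delta>\<close> by (intro nn_integral_ecc_diff_le) simp_all
    also have "\<dots> \<le> ennreal (real M ^ 4 * \<epsilon> / 4)"
      using bound by (rule ennreal_leI)
    finally show "(\<integral>\<^sup>+ r. indicator {0..} r * ennreal \<bar>real_of_int (ecc x M r - ecc x' M r)\<bar> \<partial>lborel)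
        \<le> ennreal (real M ^ 4 * \<epsilon> / 4)" .
  qed
qed

end
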